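(* For every $n\ge 2$ there exists an update sequence of width $3$ in which $n$ points arrive on which every deterministic strict online embedding into HSTs has distortion at least $2^{n-2}$.
   Context: For $\mu\ge1$, a $\mu$-HST is the metric on the leaves of a rooted tree with node weights $\varphi\ge0$ ($\varphi(v)=0$ iff $v$ is a leaf, $\varphi(v)\le\varphi(u)/\mu$ when $v$ is a child of $u$), leaf distance $\varphi(\mathrm{lca}(u,v))$; "HSTs" is the family of such metrics. An update sequence on a metric $(X,d)$ is a sequence $(v_t,o_t)\in X\times\{+,-\}$ ($v_t$ arrives if $o_t=+$, leaves if $o_t=-$) with alive sets $L_0=\varnothing$, $L_t=L_{t-1}\cup\{v_t\}$ or $L_{t-1}\setminus\{v_t\}$; its width is $\max_t|L_t|$. A deterministic strict online embedding into HSTs outputs after $\sigma_t$ (depending only on $\sigma_1,\dots,\sigma_t$, the sequence being possibly chosen adaptively against the deterministic embedding) an HST metric $d_t$ on $L_t$ with $d_t(u,v)=d_{t-1}(u,v)$ for all $u,v\in L_{t-1}\cap L_t$. Its distortion is the least $\lambda$ for which there is $c>0$ with $d(u,v)\le c\,d_t(u,v)\le\lambda d(u,v)$ for all $t$ and $u,v\in L_t$. *)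

theory Defs
  imports Main "HOL-Library.Extended_Real"
begin

definition is_metric :: "('a \<Rightarrow> 'a \<Rightarrow> real) \<Rightarrow> bool" where
  "is_metric d \<longleftrightarrow>
     (\<forall>x y. d x y \<ge> 0) \<and> (\<forall>x y. d x y = 0 \<longleftrightarrow> x = y) \<and>
     (\<forall>x y. d x y = d y x) \<and> (\<forall>x y z. d x z \<le> d x y + d y z)"

definition rooted_tree :: "nat set \<Rightarrow> nat \<Rightarrow> (nat \<Rightarrow> nat) \<Rightarrow> bool" where
  "rooted_tree V r par \<longleftrightarrow> finite V \<and> r \<in> V \<and> par r = r \<and>
     (\<forall>v\<in>V. par v \<in> V) \<and> (\<forall>v\<in>V. \<exists>k. (par ^^ k) v = r)"

definition tree_anc :: "(nat \<Rightarrow> nat) \<Rightarrow> nat \<Rightarrow> nat \<Rightarrow> bool" where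
  "tree_anc par u v \<longleftrightarrow> (\<exists>k. (par ^^ k) v = u)"

definition tree_child :: "nat set \<Rightarrow> nat \<Rightarrow> (nat \<Rightarrow> nat) \<Rightarrow> nat \<Rightarrow> nat \<Rightarrow> bool" where
  "tree_child V r par w u \<longleftrightarrow> w \<in> V \<and> w \<noteq> r \<and> par w = u"

definition tree_leaf :: "nat set \<Rightarrow> nat \<Rightarrow> (nat \<Rightarrow> nat) \<Rightarrow> nat \<Rightarrow> bool" where
  "tree_leaf V r par v \<longleftrightarrow> v \<in> V \<and> \<not> (\<exists>w. tree_child V r par w v)"

definition is_lca :: "(nat \<Rightarrow> nat) \<Rightarrow> nat \<Rightarrow> nat \<Rightarrow> nat \<Rightarrow> bool" where
  "is_lca par a b w \<longleftrightarrow> tree_anc par w a \<and> tree_anc par w b \<and>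
     (\<forall>w'. tree_anc par w' a \<and> tree_anc par w' b \<longrightarrow> tree_anc par w' w)"

definition is_mu_HST_metric :: "real \<Rightarrow> 'a set \<Rightarrow> ('a \<Rightarrow> 'a \<Rightarrow> real) \<Rightarrow> bool" where
  "is_mu_HST_metric \<mu> L \<delta> \<longleftrightarrow> L = {} \<or>
    (\<exists>V r par (\<phi>::nat \<Rightarrow> real) (leaf::'a \<Rightarrow> nat).
       rooted_tree V r par \<and>
       bij_betw leaf L {v. tree_leaf V r par v} \<and>
       (\<forall>v\<in>V. \<phi> v \<ge> 0) \<and>
       (\<forall>v\<in>V. \<phi> v = 0 \<longleftrightarrow> tree_leaf V r par v) \<and>
       (\<forall>u w. tree_child V r par w u \<longrightarrow> \<phi> w \<le> \<phi> u / \<mu>) \<and>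
       (\<forall>x\<in>L. \<forall>y\<in>L. \<exists>w. is_lca par (leaf x) (leaf y) w \<and> \<delta> x y = \<phi> w))"

definition is_HST_metric :: "'a set \<Rightarrow> ('a \<Rightarrow> 'a \<Rightarrow> real) \<Rightarrow> bool" where
  "is_HST_metric L \<delta> \<longleftrightarrow> (\<exists>\<mu>\<ge>1. is_mu_HST_metric \<mu> L \<delta>)"

text \<open>An update is a pair (v, o) with o = True for arrival (+), False for departure (-).\<close>

definition alive :: "('a \<times> bool) list \<Rightarrow> 'a set" where
  "alive \<sigma> = foldl (\<lambda>L (v, arr). if arr then insert v L else L - {v}) {} \<sigma>"

definition width :: "('a \<times> bool) list \<Rightarrow> nat" where
  "width \<sigma> = Max {card (alive (take t \<sigma>)) | t. t \<le> length \<sigma>}"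

definition n_points_arrive :: "('a \<times> bool) list \<Rightarrow> nat \<Rightarrow> bool" where
  "n_points_arrive \<sigma> n \<longleftrightarrow>
     distinct (map fst (filter snd \<sigma>)) \<and> length (filter snd \<sigma>) = n \<and>
     (\<forall>t < length \<sigma>. \<not> snd (\<sigma> ! t) \<longrightarrow> fst (\<sigma> ! t) \<in> alive (take t \<sigma>))"

text \<open>A deterministic online algorithm maps the prefix sigma_1..sigma_t to the output
  metric d_t; it must output an HST metric on L_t and never change distances between
  points that stay alive.\<close>
definition strict_online_HST_embedding ::
  "(('a \<times> bool) list \<Rightarrow> 'a \<Rightarrow> 'a \<Rightarrow> real) \<Rightarrow> bool" where
  "strict_online_HST_embedding A \<longleftrightarrow>
     (\<forall>\<sigma>. is_HST_metric (alive \<sigma>) (A \<sigma>)) \<and>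
     (\<forall>\<sigma> x. \<forall>u\<in>alive \<sigma> \<inter> alive (\<sigma> @ [x]). \<forall>v\<in>alive \<sigma> \<inter> alive (\<sigma> @ [x]).
         A (\<sigma> @ [x]) u v = A \<sigma> u v)"

definition distortion_admissible ::
  "('a \<Rightarrow> 'a \<Rightarrow> real) \<Rightarrow> (('a \<times> bool) list \<Rightarrow> 'a \<Rightarrow> 'a \<Rightarrow> real) \<Rightarrow> ('a \<times> bool) list \<Rightarrow> real \<Rightarrow> bool" where
  "distortion_admissible d A \<sigma> lam \<longleftrightarrow>
     (\<exists>c>0. \<forall>t\<le>length \<sigma>. \<forall>u\<in>alive (take t \<sigma>). \<forall>v\<in>alive (take t \<sigma>).
        d u v \<le> c * A (take t \<sigma>) u v \<and> c * A (take t \<sigma>) u v \<le> lam * d u v)"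

text \<open>The distortion is the least admissible lambda (infinite if none exists).\<close>
definition distortion ::
  "('a \<Rightarrow> 'a \<Rightarrow> real) \<Rightarrow> (('a \<times> bool) list \<Rightarrow> 'a \<Rightarrow> 'a \<Rightarrow> real) \<Rightarrow> ('a \<times> bool) list \<Rightarrow> ereal" where
  "distortion d A \<sigma> = Inf {ereal lam | lam. distortion_admissible d A \<sigma> lam}"

end

theory Submission
  imports Defs
begin

text \<open>Take the real line with d x y = |x - y| and start with the points 0 and 1. While two
  points a < b are alive, the adversary inserts the midpoint m. HST metrics are ultrametrics,
  so one of the two halves [a, m], [m, b] is embedded at distance at least the embedded distance
  of a and b; the adversary deletes the endpoint outside that half. After n - 2 rounds n points
  have arrived, never more than three were alive at once, the real distance of the surviving
  pair has shrunk by the factor 2^(n-2), and strictness forbids the embedding to shrink their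
  embedded distance below that of 0 and 1.\<close>

lemma tree_anc_trans: "tree_anc par u v \<Longrightarrow> tree_anc par v w \<Longrightarrow> tree_anc par u w"
  unfolding tree_anc_def by (metis funpow_add comp_apply)

lemma tree_anc_funpow_le: "k \<le> k' \<Longrightarrow> tree_anc par ((par ^^ k') v) ((par ^^ k) v)"
  unfolding tree_anc_def by (metis funpow_add comp_apply le_add_diff_inverse2)

lemma tree_anc_linear:
  assumes "tree_anc par u w" "tree_anc par u' w"
  shows "tree_anc par u u' \<or> tree_anc par u' u"
proof -
  obtain k k' where "(par ^^ k) w = u" "(par ^^ k') w = u'"
    using assms unfolding tree_anc_def by blast
  then show ?thesis using tree_anc_funpow_le nat_le_linear by metis
qed

lemma is_lca_triangle:
  assumes "is_lca par x y w\<^sub>1" "is_lca par y z w\<^sub>2" "is_lca par x z w"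
  shows "tree_anc par w\<^sub>1 w \<or> tree_anc par w\<^sub>2 w"
proof -
  have "tree_anc par w\<^sub>1 y" "tree_anc par w\<^sub>2 y"
    using assms by (auto simp: is_lca_def)
  then consider "tree_anc par w\<^sub>1 w\<^sub>2" | "tree_anc par w\<^sub>2 w\<^sub>1"
    using tree_anc_linear by blast
  then show ?thesis
  proof cases
    case 1
    then have "tree_anc par w\<^sub>1 z" using assms(2) tree_anc_trans by (auto simp: is_lca_def)
    then show ?thesis using assms(1,3) by (auto simp: is_lca_def)
  next
    case 2
    then have "tree_anc par w\<^sub>2 x" using assms(1) tree_anc_trans by (auto simp: is_lca_def)
    then show ?thesis using assms(2,3) by (auto simp: is_lca_def)
  qed
qed

lemma rooted_tree_funpow_par_in:
  "rooted_tree V r par \<Longrightarrow> v \<in> V \<Longrightarrow> (par ^^ k) v \<in> V"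
  by (induction k) (auto simp: rooted_tree_def)

lemma HST_weight_le_ancestor:
  fixes \<phi> :: "nat \<Rightarrow> real"
  assumes tree: "rooted_tree V r par" and "\<mu> \<ge> 1"
    and nonneg: "\<forall>v\<in>V. \<phi> v \<ge> 0"
    and decay: "\<forall>u w. tree_child V r par w u \<longrightarrow> \<phi> w \<le> \<phi> u / \<mu>"
    and "v \<in> V"
  shows "\<phi> v \<le> \<phi> ((par ^^ k) v)"
  using \<open>v \<in> V\<close>
proof (induction k arbitrary: v)
  case 0
  then show ?case by simp
next
  case (Suc k)
  have par_v: "par v \<in> V" using tree Suc.prems by (auto simp: rooted_tree_def)
  have "\<phi> v \<le> \<phi> (par v)"
  proof (cases "v = r")
    case True
    then show ?thesis using tree by (simp add: rooted_tree_def)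
  next
    case False
    then have "\<phi> v \<le> \<phi> (par v) / \<mu>"
      using decay Suc.prems by (simp add: tree_child_def)
    also have "\<dots> \<le> \<phi> (par v) / 1"
      using nonneg par_v \<open>\<mu> \<ge> 1\<close> by (intro divide_left_mono) auto
    finally show ?thesis by simp
  qed
  also have "\<dots> \<le> \<phi> ((par ^^ k) (par v))" using Suc.IH par_v .
  finally show ?case by (simp add: funpow_Suc_right del: funpow.simps)
qed

lemma HST_metric_ultrametric:
  assumes "is_HST_metric L \<delta>" "x \<in> L" "y \<in> L" "z \<in> L"
  shows "\<delta> x z \<le> max (\<delta> x y) (\<delta> y z)"
proof -
  obtain \<mu> where "\<mu> \<ge> 1" "is_mu_HST_metric \<mu> L \<delta>"
    using assms(1) unfolding is_HST_metric_def by blast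
  moreover have "L \<noteq> {}" using assms by blast
  ultimately obtain V r par \<phi> leaf where tree: "rooted_tree V r par"
    and leaves: "bij_betw leaf L {v. tree_leaf V r par v}"
    and nonneg: "\<forall>v\<in>V. \<phi> v \<ge> 0"
    and decay: "\<forall>u w. tree_child V r par w u \<longrightarrow> \<phi> w \<le> \<phi> u / \<mu>"
    and lca: "\<forall>x\<in>L. \<forall>y\<in>L. \<exists>w. is_lca par (leaf x) (leaf y) w \<and> \<delta> x y = \<phi> w"
    unfolding is_mu_HST_metric_def by blast
  obtain w\<^sub>1 where w\<^sub>1: "is_lca par (leaf x) (leaf y) w\<^sub>1" "\<delta> x y = \<phi> w\<^sub>1"
    using lca assms by blast
  obtain w\<^sub>2 where w\<^sub>2: "is_lca par (leaf y) (leaf z) w\<^sub>2" "\<delta> y z = \<phi> w\<^sub>2"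
    using lca assms by blast
  obtain w where w: "is_lca par (leaf x) (leaf z) w" "\<delta> x z = \<phi> w"
    using lca assms by blast
  have "leaf x \<in> V" using leaves assms(2) by (auto simp: bij_betw_def tree_leaf_def)
  then have "w \<in> V"
    using w(1) rooted_tree_funpow_par_in[OF tree] unfolding is_lca_def tree_anc_def by blast
  then have below_ancestor: "\<phi> w \<le> \<phi> u" if "tree_anc par u w" for u
    using that HST_weight_le_ancestor[OF tree \<open>\<mu> \<ge> 1\<close> nonneg decay] unfolding tree_anc_def by blast
  from is_lca_triangle[OF w\<^sub>1(1) w\<^sub>2(1) w(1)] show ?thesis
  proof
    assume "tree_anc par w\<^sub>1 w"
    then show ?thesis using below_ancestor w\<^sub>1(2) w(2) by fastforce
  next
    assume "tree_anc par w\<^sub>2 w"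
    then show ?thesis using below_ancestor w\<^sub>2(2) w(2) by fastforce
  qed
qed

lemma strict_online_HST_embedding_stable:
  assumes "strict_online_HST_embedding A"
    and "u \<in> alive \<sigma>" "v \<in> alive \<sigma>" "u \<in> alive (\<sigma> @ [x])" "v \<in> alive (\<sigma> @ [x])"
  shows "A (\<sigma> @ [x]) u v = A \<sigma> u v"
  using assms unfolding strict_online_HST_embedding_def by blast

lemma strict_online_HST_embedding_ultrametric:
  assumes "strict_online_HST_embedding A" "x \<in> alive \<sigma>" "y \<in> alive \<sigma>" "z \<in> alive \<sigma>"
  shows "A \<sigma> x z \<le> max (A \<sigma> x y) (A \<sigma> y z)"
proof (rule HST_metric_ultrametric)
  show "is_HST_metric (alive \<sigma>) (A \<sigma>)"
    using assms(1) unfolding strict_online_HST_embedding_def by blast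
qed (use assms in auto)

lemma distortion_ge_ratio:
  assumes "t \<le> length \<sigma>" "u \<in> alive (take t \<sigma>)" "v \<in> alive (take t \<sigma>)"
    and "t' \<le> length \<sigma>" "u' \<in> alive (take t' \<sigma>)" "v' \<in> alive (take t' \<sigma>)"
    and "d u' v' > 0" "A (take t \<sigma>) u v \<le> A (take t' \<sigma>) u' v'"
  shows "distortion d A \<sigma> \<ge> ereal (d u v / d u' v')"
  unfolding distortion_def
proof (rule Inf_greatest, clarify)
  fix lam
  assume "distortion_admissible d A \<sigma> lam"
  then obtain c where "c > 0" and bounds: "\<forall>t\<le>length \<sigma>. \<forall>u\<in>alive (take t \<sigma>). \<forall>v\<in>alive (take t \<sigma>).
      d u v \<le> c * A (take t \<sigma>) u v \<and> c * A (take t \<sigma>) u v \<le> lam * d u v"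
    unfolding distortion_admissible_def by blast
  have "d u v \<le> c * A (take t \<sigma>) u v" using bounds assms(1-3) by blast
  also have "\<dots> \<le> c * A (take t' \<sigma>) u' v'" using \<open>c > 0\<close> assms(8) by simp
  also have "\<dots> \<le> lam * d u' v'" using bounds assms(4-6) by blast
  finally show "ereal (d u v / d u' v') \<le> ereal lam"
    using \<open>d u' v' > 0\<close> by (simp add: pos_divide_le_eq)
qed

lemma alive_snoc: "alive (\<sigma> @ [(v, arr)]) = (if arr then insert v (alive \<sigma>) else alive \<sigma> - {v})"
  by (simp add: alive_def)

lemma width_snoc: "width (\<sigma> @ [x]) = max (width \<sigma>) (card (alive (\<sigma> @ [x])))"
proof -
  have "{card (alive (take t (\<sigma> @ [x]))) | t. t \<le> length (\<sigma> @ [x])} =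
      insert (card (alive (\<sigma> @ [x]))) {card (alive (take t \<sigma>)) | t. t \<le> length \<sigma>}"
    by (force simp: le_Suc_eq)
  moreover have "{card (alive (take t \<sigma>)) | t. t \<le> length \<sigma>} \<noteq> {}" by blast
  ultimately show ?thesis
    unfolding width_def by (simp add: max.commute)
qed

lemma width_Nil: "width [] = 0"
  by (simp add: width_def alive_def)

lemma n_points_arrive_snoc_arrival:
  assumes "n_points_arrive \<sigma> n" "v \<notin> set (map fst (filter snd \<sigma>))"
  shows "n_points_arrive (\<sigma> @ [(v, True)]) (Suc n)"
  using assms by (auto simp: n_points_arrive_def nth_append less_Suc_eq)

lemma n_points_arrive_snoc_departure:
  assumes "n_points_arrive \<sigma> n" "v \<in> alive \<sigma>"
  shows "n_points_arrive (\<sigma> @ [(v, False)]) n"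
  using assms by (auto simp: n_points_arrive_def nth_append less_Suc_eq)

definition adversary_step ::
  "((real \<times> bool) list \<Rightarrow> real \<Rightarrow> real \<Rightarrow> real) \<Rightarrow>
   real \<times> real \<times> (real \<times> bool) list \<Rightarrow> real \<times> real \<times> (real \<times> bool) list" where
  "adversary_step A = (\<lambda>(a, b, \<sigma>). let m = (a + b) / 2; \<sigma>' = \<sigma> @ [(m, True)] in
     if A \<sigma>' m b \<le> A \<sigma>' a m then (a, m, \<sigma>' @ [(b, False)]) else (m, b, \<sigma>' @ [(a, False)]))"

definition adversary_play ::
  "((real \<times> bool) list \<Rightarrow> real \<Rightarrow> real \<Rightarrow> real) \<Rightarrow> nat \<Rightarrow> real \<times> real \<times> (real \<times> bool) list" where
  "adversary_play A k = (adversary_step A ^^ k) (0, 1, [(0, True), (1, True)])"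

text \<open>The last conjunct keeps every midpoint fresh.\<close>
definition bisection_state :: "nat \<Rightarrow> real \<times> real \<times> (real \<times> bool) list \<Rightarrow> bool" where
  "bisection_state k = (\<lambda>(a, b, \<sigma>). b - a = 1 / 2 ^ k \<and> alive \<sigma> = {a, b} \<and>
     (\<exists>\<tau>. \<sigma> = [(0, True), (1, True)] @ \<tau>) \<and> n_points_arrive \<sigma> (k + 2) \<and> width \<sigma> \<le> 3 \<and>
     set (map fst (filter snd \<sigma>)) \<inter> {a<..<b} = {})"

lemma bisection_state_less:
  assumes "bisection_state k (a, b, \<sigma>)"
  shows "a < b"
proof -
  have "b - a = 1 / 2 ^ k" using assms by (simp add: bisection_state_def)
  moreover have "(0::real) < 1 / 2 ^ k" by simp
  ultimately show ?thesis by linarith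
qed

lemma bisection_state_halve:
  assumes state: "bisection_state k (a, b, \<sigma>)" and m: "m = (a + b) / 2"
    and half: "(a', b', e) = (a, m, b) \<or> (a', b', e) = (m, b, a)"
  shows "bisection_state (Suc k) (a', b', \<sigma> @ [(m, True), (e, False)])"
proof -
  have len: "b - a = 1 / 2 ^ k" and alive: "alive \<sigma> = {a, b}"
    and init: "\<exists>\<tau>. \<sigma> = [(0, True), (1, True)] @ \<tau>" and arrive: "n_points_arrive \<sigma> (k + 2)"
    and width: "width \<sigma> \<le> 3" and fresh: "set (map fst (filter snd \<sigma>)) \<inter> {a<..<b} = {}"
    using state by (simp_all add: bisection_state_def)
  have "a < b" using state by (rule bisection_state_less)
  then have "a < m" "m < b" using m by simp_all
  then have len': "b' - a' = (b - a) / 2" and sub: "{a'<..<b'} \<subseteq> {a<..<b}"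
    and m_end: "m \<in> {a', b'}" and e_drop: "{a, b, m} - {e} = {a', b'}" and e_alive: "e \<in> {a, b, m}"
    using half m by auto
  let ?\<sigma>' = "\<sigma> @ [(m, True)]"
  let ?\<sigma>'' = "?\<sigma>' @ [(e, False)]"
  have alive': "alive ?\<sigma>' = {a, b, m}" using alive by (auto simp: alive_snoc)
  have alive'': "alive ?\<sigma>'' = {a', b'}"
    by (simp only: alive_snoc[of ?\<sigma>'] alive' if_False e_drop)
  have "\<exists>\<tau>. ?\<sigma>'' = [(0, True), (1, True)] @ \<tau>" using init by auto
  moreover have "n_points_arrive ?\<sigma>'' (Suc k + 2)"
  proof -
    have "m \<notin> set (map fst (filter snd \<sigma>))" using fresh \<open>a < m\<close> \<open>m < b\<close> by auto
    then show ?thesis using n_points_arrive_snoc_arrival[OF arrive] e_alive alive'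
      by (intro n_points_arrive_snoc_departure) simp_all
  qed
  moreover have "width ?\<sigma>'' \<le> 3"
  proof -
    have "card (alive ?\<sigma>') \<le> 3" unfolding alive' by (auto simp: card_insert_if)
    moreover have "card (alive ?\<sigma>'') \<le> 3" unfolding alive'' by (auto simp: card_insert_if)
    ultimately show ?thesis using width by (simp only: width_snoc max.bounded_iff)
  qed
  moreover have "set (map fst (filter snd ?\<sigma>'')) \<inter> {a'<..<b'} = {}"
  proof -
    have "set (map fst (filter snd ?\<sigma>'')) = insert m (set (map fst (filter snd \<sigma>)))" by simp
    then show ?thesis using fresh sub m_end by auto
  qed
  moreover have "b' - a' = 1 / 2 ^ Suc k" using len len' by simp
  ultimately have "bisection_state (Suc k) (a', b', ?\<sigma>'')"
    using alive'' unfolding bisection_state_def prod.case by blast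
  then show ?thesis by simp
qed

lemma bisection_state_adversary_step:
  assumes "bisection_state k st"
  shows "bisection_state (Suc k) (adversary_step A st)"
proof -
  obtain a b \<sigma> where st: "st = (a, b, \<sigma>)" by (cases st)
  define m where "m = (a + b) / 2"
  have "bisection_state (Suc k) (a, m, \<sigma> @ [(m, True), (b, False)])"
    "bisection_state (Suc k) (m, b, \<sigma> @ [(m, True), (a, False)])"
    using bisection_state_halve[OF assms[unfolded st] m_def] by blast+
  then show ?thesis by (simp add: st adversary_step_def m_def Let_def)
qed

lemma adversary_play_Suc: "adversary_play A (Suc k) = adversary_step A (adversary_play A k)"
  by (simp add: adversary_play_def)

lemma bisection_state_adversary_play: "bisection_state k (adversary_play A k)"
proof (induction k)
  case 0
  have "alive [(0::real, True), (1, True)] = {0, 1}" by (auto simp: alive_def)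
  moreover have "width [(0::real, True), (1, True)] \<le> 3"
    using width_snoc[of "[]" "(0::real, True)"] width_snoc[of "[(0::real, True)]" "(1, True)"]
    by (simp add: width_Nil alive_def)
  moreover have "n_points_arrive [(0::real, True), (1, True)] (0 + 2)"
    by (simp add: n_points_arrive_def less_Suc_eq)
  ultimately show ?case by (auto simp: adversary_play_def bisection_state_def)
next
  case (Suc k)
  then show ?case unfolding adversary_play_Suc by (rule bisection_state_adversary_step)
qed

lemma adversary_step_embedded_distance:
  assumes emb: "strict_online_HST_embedding A" and alive: "alive \<sigma> = {a, b}" and "a < b"
    and step: "adversary_step A (a, b, \<sigma>) = (a', b', \<sigma>'')"
  shows "A \<sigma> a b \<le> A \<sigma>'' a' b'"
proof -
  define m where "m = (a + b) / 2"
  let ?\<sigma>' = "\<sigma> @ [(m, True)]"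
  have "a < m" "m < b" using \<open>a < b\<close> m_def by simp_all
  have alive': "alive ?\<sigma>' = {a, b, m}" using alive by (auto simp: alive_snoc)
  have "A \<sigma> a b = A ?\<sigma>' a b"
    using strict_online_HST_embedding_stable[OF emb] alive' alive by simp
  also have "\<dots> \<le> max (A ?\<sigma>' a m) (A ?\<sigma>' m b)"
    using strict_online_HST_embedding_ultrametric[OF emb] alive' by simp
  finally have split_bound: "A \<sigma> a b \<le> max (A ?\<sigma>' a m) (A ?\<sigma>' m b)" .
  have alive'': "alive (?\<sigma>' @ [(e, False)]) = {a, b, m} - {e}" for e
    by (simp only: alive_snoc[of ?\<sigma>'] alive' if_False)
  have stable: "A (?\<sigma>' @ [(e, False)]) x y = A ?\<sigma>' x y"
    if "{x, y} \<subseteq> {a, b, m} - {e}" for x y e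
    using that alive' alive'' by (intro strict_online_HST_embedding_stable[OF emb]) auto
  have "adversary_step A (a, b, \<sigma>) = (if A ?\<sigma>' m b \<le> A ?\<sigma>' a m
      then (a, m, ?\<sigma>' @ [(b, False)]) else (m, b, ?\<sigma>' @ [(a, False)]))"
    by (simp only: adversary_step_def m_def Let_def prod.case)
  then consider
      (left) "A ?\<sigma>' m b \<le> A ?\<sigma>' a m" "a' = a" "b' = m" "\<sigma>'' = ?\<sigma>' @ [(b, False)]"
    | (right) "\<not> A ?\<sigma>' m b \<le> A ?\<sigma>' a m" "a' = m" "b' = b" "\<sigma>'' = ?\<sigma>' @ [(a, False)]"
    using step by (cases "A ?\<sigma>' m b \<le> A ?\<sigma>' a m") simp_all
  then show ?thesis
  proof cases
    case left
    then have "A \<sigma>'' a' b' = A ?\<sigma>' a m" using stable[of a m b] \<open>a < m\<close> \<open>m < b\<close> by simp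
    then show ?thesis using split_bound left(1) by simp
  next
    case right
    then have "A \<sigma>'' a' b' = A ?\<sigma>' m b" using stable[of m b a] \<open>a < m\<close> \<open>m < b\<close> by simp
    then show ?thesis using split_bound right(1) by simp
  qed
qed

lemma adversary_play_embedded_distance:
  assumes emb: "strict_online_HST_embedding A" and play: "adversary_play A k = (a, b, \<sigma>)"
  shows "A [(0, True), (1, True)] 0 1 \<le> A \<sigma> a b"
  using play
proof (induction k arbitrary: a b \<sigma>)
  case 0
  then show ?case by (simp add: adversary_play_def)
next
  case (Suc k)
  obtain a\<^sub>0 b\<^sub>0 \<sigma>\<^sub>0 where play\<^sub>0: "adversary_play A k = (a\<^sub>0, b\<^sub>0, \<sigma>\<^sub>0)"
    by (cases "adversary_play A k")
  have "bisection_state k (a\<^sub>0, b\<^sub>0, \<sigma>\<^sub>0)"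
    using bisection_state_adversary_play[of k A] play\<^sub>0 by simp
  then have "alive \<sigma>\<^sub>0 = {a\<^sub>0, b\<^sub>0}" "a\<^sub>0 < b\<^sub>0"
    by (simp add: bisection_state_def, rule bisection_state_less)
  moreover have "adversary_step A (a\<^sub>0, b\<^sub>0, \<sigma>\<^sub>0) = (a, b, \<sigma>)"
    using Suc.prems play\<^sub>0 by (simp add: adversary_play_Suc)
  ultimately have "A \<sigma>\<^sub>0 a\<^sub>0 b\<^sub>0 \<le> A \<sigma> a b"
    by (rule adversary_step_embedded_distance[OF emb])
  then show ?case using Suc.IH[OF play\<^sub>0] by simp
qed

lemma adversary_play_distortion:
  assumes emb: "strict_online_HST_embedding A" and play: "adversary_play A k = (a, b, \<sigma>)"
  shows "distortion (\<lambda>x y. \<bar>x - y\<bar>) A \<sigma> \<ge> ereal (2 ^ k)"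
proof -
  have state: "bisection_state k (a, b, \<sigma>)"
    using bisection_state_adversary_play[of k A] play by simp
  then have len: "b - a = 1 / 2 ^ k" and "alive \<sigma> = {a, b}"
    and "\<exists>\<tau>. \<sigma> = [(0, True), (1, True)] @ \<tau>"
    by (simp_all add: bisection_state_def)
  then obtain \<tau> where \<sigma>: "\<sigma> = [(0, True), (1, True)] @ \<tau>" by blast
  have "distortion (\<lambda>x y. \<bar>x - y\<bar>) A \<sigma> \<ge> ereal (\<bar>0 - 1\<bar> / \<bar>a - b\<bar>)"
    using \<open>alive \<sigma> = {a, b}\<close> bisection_state_less[OF state]
      adversary_play_embedded_distance[OF emb play]
    by (intro distortion_ge_ratio[where t = 2 and t' = "length \<sigma>"]) (auto simp: \<sigma> alive_def)
  moreover have "\<bar>0 - 1\<bar> / \<bar>a - b\<bar> = (2 ^ k :: real)"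
    using len by (simp add: abs_minus_commute[of a])
  ultimately show ?thesis by simp
qed

theorem mainTheorem20:
  fixes n :: nat
  assumes "n \<ge> 2"
  shows "\<exists>d :: real \<Rightarrow> real \<Rightarrow> real. is_metric d \<and>
           (\<forall>A. strict_online_HST_embedding A \<longrightarrow>
              (\<exists>\<sigma>. n_points_arrive \<sigma> n \<and> width \<sigma> \<le> 3 \<and>
                    distortion d A \<sigma> \<ge> ereal (2 ^ (n - 2))))"
proof (intro exI[of _ "\<lambda>x y. \<bar>x - y\<bar>"] conjI allI impI)
  show "is_metric (\<lambda>x y :: real. \<bar>x - y\<bar>)" unfolding is_metric_def by auto
  fix A :: "(real \<times> bool) list \<Rightarrow> real \<Rightarrow> real \<Rightarrow> real"
  assume emb: "strict_online_HST_embedding A"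
  obtain a b \<sigma> where play: "adversary_play A (n - 2) = (a, b, \<sigma>)"
    by (cases "adversary_play A (n - 2)")
  then have "bisection_state (n - 2) (a, b, \<sigma>)"
    using bisection_state_adversary_play[of "n - 2" A] by simp
  then have "n_points_arrive \<sigma> (n - 2 + 2)" and "width \<sigma> \<le> 3"
    by (simp_all add: bisection_state_def)
  moreover have "n - 2 + 2 = n" using \<open>n \<ge> 2\<close> by simp
  moreover have "distortion (\<lambda>x y. \<bar>x - y\<bar>) A \<sigma> \<ge> ereal (2 ^ (n - 2))"
    using adversary_play_distortion[OF emb play] .
  ultimately show "\<exists>\<sigma>. n_points_arrive \<sigma> n \<and> width \<sigma> \<le> 3 \<and>
      distortion (\<lambda>x y. \<bar>x - y\<bar>) A \<sigma> \<ge> ereal (2 ^ (n - 2))"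
    by metis
qed

end
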